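(* Let $g\ge2$, let $p$ be a prime with $p\equiv1\pmod{4g}$, and let $K$ be a field of characteristic zero. Let $u(T)$ be the unique element of $1+T^{-1}\mathbb{Z}[[T^{-1}]]$ with $u(T)^{2g}-u(T)^{2g-1}+T^{-4g}=0$, and set $x(T)=T^2u(T)$ and $y(T)=-T\,x(T)^g$ in $\mathbb{Z}[[T^{-1}]][T]\subset K((T^{-1}))$. Let $A$ be the $K$-subalgebra of $K((T^{-1}))$ generated by $x(T)$ and $y(T)$. Then there exist $e_0\in\mathbb{Z}_{(p)}^*$, $a(T)\in A\cap\mathbb{Z}[[T^{-1}]][T]$ and $g(T)\in T^{-1}\mathbb{Z}[[T^{-1}]]$ such that $$T^p-e_0T=a(T)+g(T).$$
   Context: $\mathbb{Z}_{(p)}^*$ denotes the units of the localization of $\mathbb{Z}$ at $p$ (i.e. $p$-adic units in $\mathbb{Q}$). Note $y(T)^2=x(T)^{2g+1}+x(T)$, so $A\cong K[x,y]/(y^2-x^{2g+1}-x)$. *)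

theory Defs
  imports "HOL-Computational_Algebra.Computational_Algebra" "HOL-Number_Theory.Number_Theory"
begin

text \<open>We work in K((S)) with S = T^(-1), i.e. the formal Laurent series ring 'a fls,
  where fls_X is S = T^(-1) and fls_X_inv is T.\<close>

text \<open>Coefficients are integers: Z[[T^-1]][T] inside K((T^-1)).\<close>
definition int_coeffs :: "'a::ring_1 fls \<Rightarrow> bool" where
  "int_coeffs f \<longleftrightarrow> (\<forall>n. fls_nth f n \<in> \<int>)"

definition in_Tinv_Z_Tinv :: "'a::ring_1 fls \<Rightarrow> bool" where
  "in_Tinv_Z_Tinv f \<longleftrightarrow> int_coeffs f \<and> (\<forall>n\<le>0. fls_nth f n = 0)"

definition in_one_plus_Tinv_Z_Tinv :: "'a::ring_1 fls \<Rightarrow> bool" where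
  "in_one_plus_Tinv_Z_Tinv f \<longleftrightarrow> in_Tinv_Z_Tinv (f - 1)"

inductive_set subalg_gen :: "'a::field fls set \<Rightarrow> 'a fls set" for G where
  const: "fls_const c \<in> subalg_gen G"
| gen: "f \<in> G \<Longrightarrow> f \<in> subalg_gen G"
| add: "f \<in> subalg_gen G \<Longrightarrow> h \<in> subalg_gen G \<Longrightarrow> f + h \<in> subalg_gen G"
| mult: "f \<in> subalg_gen G \<Longrightarrow> h \<in> subalg_gen G \<Longrightarrow> f * h \<in> subalg_gen G"

definition Zp_unit :: "nat \<Rightarrow> rat \<Rightarrow> bool" where
  "Zp_unit p e \<longleftrightarrow> (\<exists>a b::int. b \<noteq> 0 \<and> e = of_int a / of_int b \<and>
      \<not> int p dvd a \<and> \<not> int p dvd b)"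

end

theory Submission
  imports Defs
begin

unbundle fps_syntax

text \<open>Write p = 2N + 1 with N = 2gk, and put M = x^(2g). Multiplied by T^(4g), the equation
  for u says T^2 x^(2g-1) = M + 1. Raising this to the N-th power and using
  (x^(2g-1))^N = M^j0 with j0 = (2g-1)k gives T^p = \<Sum>j\<le>N. (N choose j) T M^(j-j0).
  For j > j0 the summand is -(N choose j) y x^(g(2(j-j0)-1)), which lies in A; for j < j0 it
  has order at least 4g - 1 in T^-1; and the middle summand is e0 T with e0 = N choose j0,
  which is prime to p because N < p.\<close>

lemma int_coeffs_add: "int_coeffs f \<Longrightarrow> int_coeffs g \<Longrightarrow> int_coeffs (f + g)"
  unfolding int_coeffs_def by auto

lemma int_coeffs_diff: "int_coeffs f \<Longrightarrow> int_coeffs g \<Longrightarrow> int_coeffs (f - g)"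
  unfolding int_coeffs_def by auto

lemma int_coeffs_mult:
  fixes f g :: "'a::comm_ring_1 fls"
  shows "int_coeffs f \<Longrightarrow> int_coeffs g \<Longrightarrow> int_coeffs (f * g)"
  unfolding int_coeffs_def by (auto simp: fls_times_nth(1))

lemma int_coeffs_one: "int_coeffs 1"
  unfolding int_coeffs_def by auto

lemma int_coeffs_of_nat: "int_coeffs (of_nat n)"
  unfolding int_coeffs_def by (simp add: fls_of_nat_nth)

lemma int_coeffs_fls_X_inv: "int_coeffs fls_X_inv"
  unfolding int_coeffs_def by auto

lemma int_coeffs_power:
  fixes f :: "'a::comm_ring_1 fls"
  shows "int_coeffs f \<Longrightarrow> int_coeffs (f ^ n)"
  by (induction n) (auto intro: int_coeffs_mult int_coeffs_one)

lemma int_coeffs_sum: "(\<And>i. i \<in> S \<Longrightarrow> int_coeffs (F i)) \<Longrightarrow> int_coeffs (sum F S)"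
  unfolding int_coeffs_def by (auto simp: fls_nth_sum)

lemma of_nat_in_subalg_gen: "of_nat n \<in> subalg_gen G"
  using subalg_gen.const[of "of_nat n"] by (simp add: fls_of_nat)

lemma subalg_gen_power: "f \<in> subalg_gen G \<Longrightarrow> f ^ n \<in> subalg_gen G"
  by (induction n) (auto intro: subalg_gen.mult of_nat_in_subalg_gen[of 1, simplified])

lemma subalg_gen_sum: "(\<And>i. i \<in> S \<Longrightarrow> F i \<in> subalg_gen G) \<Longrightarrow> sum F S \<in> subalg_gen G"
  by (induction S rule: infinite_finite_induct)
     (auto intro: subalg_gen.add of_nat_in_subalg_gen[of 0, simplified])

lemma subalg_gen_uminus: "f \<in> subalg_gen G \<Longrightarrow> - f \<in> subalg_gen G"
  using subalg_gen.mult[OF subalg_gen.const[of "-1"]] by (simp add: fls_const_mult_const[symmetric])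

lemma Zp_unit_of_nat: "prime p \<Longrightarrow> \<not> p dvd n \<Longrightarrow> Zp_unit p (of_nat n)"
  unfolding Zp_unit_def
  by (rule exI[of _ "int n"], rule exI[of _ 1]) (auto simp: prime_gt_1_nat)

lemma prime_not_dvd_binomial:
  assumes "prime p" "n < p" "k \<le> n"
  shows "\<not> p dvd (n choose k)"
proof
  assume "p dvd (n choose k)"
  then have "p dvd fact n"
    using binomial_fact_lemma[OF \<open>k \<le> n\<close>] by (metis dvd_trans dvd_triv_right)
  with assms show False by (simp add: prime_dvd_fact_iff)
qed

lemma sum_atMost_split_at:
  "j \<le> n \<Longrightarrow> (\<Sum>i\<le>n. f i) = (\<Sum>i<j. f i) + f j + (\<Sum>i\<in>{Suc j..n}. f i)"
proof -
  assume "j \<le> n"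
  then have "{..n} = {..<j} \<union> insert j {Suc j..n}" by auto
  moreover have "{..<j} \<inter> {Suc j..n} = {}" by auto
  ultimately show ?thesis by (simp add: sum.union_disjoint add_ac)
qed

lemma fls_X_inv_curve_equation:
  fixes u :: "'a::field fls"
  assumes u: "u ^ (2*g) - u ^ (2*g - 1) + fls_X ^ (4*g) = 0" and "2*g = Suc m"
  defines "x \<equiv> fls_X_inv ^ 2 * u"
  shows "fls_X_inv ^ 2 * x ^ m = x ^ Suc m + 1"
proof -
  let ?T = "fls_X_inv :: 'a fls"
  have "4*g = 2 * Suc m"
    using \<open>2*g = Suc m\<close> by simp
  then have "?T ^ (4*g) = (?T ^ 2) ^ Suc m"
    by (simp only: power_mult)
  then have "?T ^ (4*g) * (u ^ (2*g) - u ^ (2*g - 1) + fls_X ^ (4*g))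
      = x ^ Suc m - ?T ^ 2 * x ^ m + (?T * fls_X) ^ (4*g)"
    using \<open>2*g = Suc m\<close> unfolding x_def by (simp add: algebra_simps)
  with u have "x ^ Suc m - fls_X_inv ^ 2 * x ^ m + 1 = 0"
    by (simp add: fls_X_inv_times_conv_shift)
  then show ?thesis by (simp add: algebra_simps eq_neg_iff_add_eq_0)
qed

lemma binomial_expansion_odd_power:
  fixes T x :: "'a::field" and m k :: nat
  assumes curve: "T ^ 2 * x ^ m = x ^ Suc m + 1" and "x \<noteq> 0"
  defines "N \<equiv> Suc m * k" and "M \<equiv> x ^ Suc m"
  shows "T ^ (2*N + 1) = (\<Sum>j<m*k. of_nat (N choose j) * (T * M ^ j / M ^ (m*k)))
           + of_nat (N choose (m*k)) * T
           + (\<Sum>j\<in>{Suc (m*k)..N}. of_nat (N choose j) * (T * M ^ (j - m*k)))"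
proof -
  have M_power: "M ^ (m*k) = (x ^ m) ^ N"
    unfolding M_def N_def by (metis power_mult mult.left_commute)
  have T_power: "T ^ (2*N + 1) = T * (T ^ 2) ^ N"
    by (simp add: power_mult)
  have "T ^ (2*N + 1) * M ^ (m*k) = T * (T ^ 2 * x ^ m) ^ N"
    by (simp only: T_power M_power power_mult_distrib mult.assoc)
  also have "\<dots> = T * (M + 1) ^ N"
    unfolding curve M_def ..
  finally have "T ^ (2*N + 1) * M ^ (m*k) = T * (M + 1) ^ N" .
  moreover have "M \<noteq> 0"
    using \<open>x \<noteq> 0\<close> unfolding M_def by simp
  ultimately have "T ^ (2*N + 1) = T * (M + 1) ^ N / M ^ (m*k)"
    by (simp add: eq_divide_eq)
  also have "\<dots> = (\<Sum>j\<le>N. of_nat (N choose j) * (T * M ^ j / M ^ (m*k)))"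
      (is "_ = (\<Sum>j\<le>N. ?F j)")
    by (simp add: binomial_ring[of M 1] sum_distrib_left sum_divide_distrib mult_ac)
  also have "\<dots> = (\<Sum>j<m*k. ?F j) + ?F (m*k) + (\<Sum>j\<in>{Suc (m*k)..N}. ?F j)"
    by (rule sum_atMost_split_at) (simp add: N_def)
  also have "?F (m*k) = of_nat (N choose (m*k)) * T"
    using \<open>M \<noteq> 0\<close> by simp
  also have "(\<Sum>j\<in>{Suc (m*k)..N}. ?F j)
      = (\<Sum>j\<in>{Suc (m*k)..N}. of_nat (N choose j) * (T * M ^ (j - m*k)))"
    using \<open>M \<noteq> 0\<close> by (intro sum.cong) (simp_all add: power_diff)
  finally show ?thesis .
qed

lemma fls_X_inv_mult_power_div_nth_nonpos:
  fixes f :: "'a::field fls"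
  assumes "fls_subdegree f \<le> -2" and "i < j" and "n \<le> 0"
  shows "(fls_X_inv * f ^ i / f ^ j) $$ n = 0"
proof (rule fls_eq0_below_subdegree)
  have "f \<noteq> 0"
    using assms(1) by auto
  then have "fls_subdegree (fls_X_inv * f ^ i / f ^ j) = (int j - int i) * - fls_subdegree f - 1"
    by (simp add: fls_divide_subdegree fls_subdegree_pow algebra_simps)
  moreover have "(int j - int i) * - fls_subdegree f \<ge> 1 * 2"
    using assms(1,2) by (intro mult_mono) auto
  ultimately show "n < fls_subdegree (fls_X_inv * f ^ i / f ^ j)"
    using assms(3) by simp
qed

lemma fls_X_inv_mult_power_in_subalg_gen:
  fixes x :: "'a::field fls"
  assumes "i \<ge> 1"
  shows "fls_X_inv * (x ^ (2*g)) ^ i \<in> subalg_gen {x, - fls_X_inv * x ^ g}"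
proof -
  have "2*g*i = g + g*(2*i - 1)"
    using assms by (cases i) (simp_all add: algebra_simps)
  then have "fls_X_inv * (x ^ (2*g)) ^ i = - ((- fls_X_inv * x ^ g) * x ^ (g*(2*i - 1)))"
    by (simp flip: power_mult power_add)
  also have "\<dots> \<in> subalg_gen {x, - fls_X_inv * x ^ g}"
    by (intro subalg_gen_uminus subalg_gen.mult subalg_gen_power subalg_gen.gen) auto
  finally show ?thesis .
qed

lemma in_one_plus_Tinv_Z_Tinv_int_coeffs:
  "in_one_plus_Tinv_Z_Tinv u \<Longrightarrow> int_coeffs u"
  unfolding in_one_plus_Tinv_Z_Tinv_def in_Tinv_Z_Tinv_def
  using int_coeffs_add[of "u - 1" 1] int_coeffs_one by simp

lemma in_one_plus_Tinv_Z_Tinv_subdegree: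
  fixes u :: "'a::ring_1 fls"
  assumes "in_one_plus_Tinv_Z_Tinv u"
  shows "u \<noteq> 0" and "fls_subdegree u = 0"
proof -
  have vanish: "(u - 1) $$ n = 0" if "n \<le> 0" for n
    using assms that unfolding in_one_plus_Tinv_Z_Tinv_def in_Tinv_Z_Tinv_def by blast
  then have "u $$ 0 = 1"
    by (metis fls_minus_nth fls_one_nth eq_iff_diff_eq_0 order_refl)
  then show "u \<noteq> 0" by auto
  have "u $$ n = 0" if "n < 0" for n
    using vanish[of n] that by simp
  with \<open>u $$ 0 = 1\<close> show "fls_subdegree u = 0"
    by (intro fls_subdegree_eqI) auto
qed

theorem lemma4p2:
  fixes g p :: nat and u :: "'a::field_char_0 fls"
  assumes "g \<ge> 2" and "prime p" and "[p = 1] (mod 4 * g)"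
    and "in_one_plus_Tinv_Z_Tinv u"
    and "u ^ (2*g) - u ^ (2*g - 1) + fls_X ^ (4*g) = 0"
  shows "let T = (fls_X_inv :: 'a fls); x = T ^ 2 * u; y = - T * x ^ g;
           A = subalg_gen {x, y} in
         \<exists>e0 a h. Zp_unit p e0 \<and> a \<in> A \<and> int_coeffs a \<and> in_Tinv_Z_Tinv h \<and>
           T ^ p - fls_const (of_rat e0) * T = a + h"
proof -
  define T where "T = (fls_X_inv :: 'a fls)"
  define x where "x = T ^ 2 * u"
  define y where "y = - T * x ^ g"
  define m where "m = 2*g - 1"
  have two_g: "2*g = Suc m"
    using assms(1) by (simp add: m_def)
  have "p mod (4*g) = 1"
    using assms(1,3) unfolding cong_def by simp
  then obtain k where p: "p = 4*g*k + 1"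
    using div_mult_mod_eq[of p "4*g"] by (metis mult.commute)
  define N where "N = Suc m * k"
  define M where "M = x ^ (2*g)"
  have "int_coeffs u" "u \<noteq> 0" "fls_subdegree u = 0"
    using in_one_plus_Tinv_Z_Tinv_int_coeffs[OF assms(4)]
      in_one_plus_Tinv_Z_Tinv_subdegree[OF assms(4)] by auto
  then have "int_coeffs T" "int_coeffs M" "x \<noteq> 0" "fls_subdegree M = - 4 * g"
    unfolding M_def x_def T_def
    by (auto simp: fls_subdegree_pow intro: int_coeffs_fls_X_inv int_coeffs_mult int_coeffs_power)
  have "T ^ 2 * x ^ m = x ^ Suc m + 1"
    using fls_X_inv_curve_equation[OF assms(5) two_g] unfolding T_def x_def .
  note expansion = binomial_expansion_odd_power[OF this \<open>x \<noteq> 0\<close>, of k]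
  define h where "h = (\<Sum>j<m*k. of_nat (N choose j) * (T * M ^ j / M ^ (m*k)))"
  define a where "a = (\<Sum>j\<in>{Suc (m*k)..N}. of_nat (N choose j) * (T * M ^ (j - m*k)))"
  define e0 where "e0 = (of_nat (N choose (m*k)) :: rat)"
  have "p = 2*N + 1"
    unfolding p N_def two_g[symmetric] by simp
  with expansion have T_power: "T ^ p = h + of_nat (N choose (m*k)) * T + a"
    unfolding h_def a_def N_def M_def two_g by simp
  then have identity: "T ^ p - fls_const (of_rat e0) * T = a + h"
    unfolding e0_def by (simp add: fls_of_nat)
  have "Zp_unit p e0"
    unfolding e0_def using assms(2) \<open>p = 2*N + 1\<close>
    by (intro Zp_unit_of_nat prime_not_dvd_binomial) (auto simp: N_def)
  have "a \<in> subalg_gen {x, y}"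
    unfolding a_def y_def M_def T_def
    by (intro subalg_gen_sum subalg_gen.mult of_nat_in_subalg_gen fls_X_inv_mult_power_in_subalg_gen) auto
  have "int_coeffs a"
    unfolding a_def using \<open>int_coeffs T\<close> \<open>int_coeffs M\<close>
    by (intro int_coeffs_sum int_coeffs_mult int_coeffs_of_nat int_coeffs_power)
  have "h = T ^ p - of_nat (N choose (m*k)) * T - a"
    using T_power by simp
  then have "int_coeffs h"
    using \<open>int_coeffs T\<close> \<open>int_coeffs a\<close>
    by (simp add: int_coeffs_diff int_coeffs_mult int_coeffs_power int_coeffs_of_nat)
  moreover have "h $$ n = 0" if "n \<le> 0" for n
    unfolding h_def T_def fls_nth_sum fls_mult_of_nat_nth
    using \<open>fls_subdegree M = - 4 * g\<close> assms(1) that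
    by (intro sum.neutral ballI) (simp add: fls_X_inv_mult_power_div_nth_nonpos)
  ultimately have "in_Tinv_Z_Tinv h"
    unfolding in_Tinv_Z_Tinv_def by blast
  show ?thesis
    unfolding Let_def T_def[symmetric] x_def[symmetric] y_def[symmetric]
    using \<open>Zp_unit p e0\<close> \<open>a \<in> subalg_gen {x, y}\<close> \<open>int_coeffs a\<close> \<open>in_Tinv_Z_Tinv h\<close> identity
    by blast
qed

end
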